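(* Let $\lambda$ and $\chi$ be infinite cardinals. Then there are functions $f_\eta$, for $\eta\in {}^\chi\lambda$, such that: (i) $\mathrm{Dom}(f_\eta)=\{\eta\restriction\alpha:\alpha<\chi\}$; (ii) $\mathrm{Rang}(f_\eta)\subseteq\lambda$; (iii) for every function $f:{}^{\chi>}\lambda\to\lambda$ there is $\eta\in{}^\chi\lambda$ with $f_\eta\subseteq f$.
   Context: ${}^\chi\lambda$ is the set of functions from $\chi$ to $\lambda$, and ${}^{\chi>}\lambda=\bigcup_{\alpha<\chi}{}^\alpha\lambda$ is the set of sequences of ordinals $<\lambda$ of length $<\chi$. For $\eta\in{}^\chi\lambda$ and $\alpha<\chi$, $\eta\restriction\alpha$ is the restriction of $\eta$ to $\alpha$. *)

theory Defs
  imports Main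
begin

text \<open>The cardinal chi is represented by a cardinal well-order r on the whole type 'c
  (Card_order r, Field r = UNIV), so the ordinals below chi are the elements of 'c ordered by r.
  The cardinal lambda is represented by an infinite type 'l.
  Sequences of length alpha < chi are partial maps 'c => 'l option with domain the
  initial segment {beta. beta <_r alpha}.\<close>

definition seq_restr :: "'c rel \<Rightarrow> ('c \<Rightarrow> 'l) \<Rightarrow> 'c \<Rightarrow> ('c \<rightharpoonup> 'l)" where
  "seq_restr r \<eta> \<alpha> = (\<lambda>\<beta>. if \<beta> \<in> Order_Relation.underS r \<alpha> then Some (\<eta> \<beta>) else None)"

end

theory Submission
  imports Defs
begin

text \<open>Guess the value of \<open>f\<close> on \<open>\<eta> \<restriction> \<alpha>\<close> to be \<open>\<eta> \<alpha>\<close>. The guesses along \<open>\<eta>\<close> are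
  well defined because \<open>\<alpha>\<close> can be read off from \<open>\<eta> \<restriction> \<alpha>\<close>, and for a given \<open>f\<close> they are
  all correct once \<open>\<eta>\<close> is defined by well-founded recursion as \<open>\<eta> \<alpha> = f (\<eta> \<restriction> \<alpha>)\<close>.
  Neither cardinal needs to be infinite.\<close>

lemma underS_eq_imp_eq:
  assumes "Linear_order r" "a \<in> Field r" "b \<in> Field r"
    and "Order_Relation.underS r a = Order_Relation.underS r b"
  shows "a = b"
proof -
  have "(a, b) \<in> r" "(b, a) \<in> r"
    using assms underS_incl_iff[OF assms(1)] by blast+
  with assms(1) show ?thesis
    unfolding linear_order_on_def partial_order_on_def antisym_def by blast
qed

lemma inj_on_seq_restr:
  assumes "Linear_order r"
  shows "inj_on (seq_restr r \<eta>) (Field r)"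
proof (rule inj_onI)
  fix a b assume "a \<in> Field r" "b \<in> Field r" and eq: "seq_restr r \<eta> a = seq_restr r \<eta> b"
  have "Order_Relation.underS r a = Order_Relation.underS r b"
    using fun_cong[OF eq] unfolding seq_restr_def by (metis option.distinct(1) set_eqI)
  with assms \<open>a \<in> Field r\<close> \<open>b \<in> Field r\<close> show "a = b" by (rule underS_eq_imp_eq)
qed

lemma seq_restr_recursion:
  assumes "Well_order r"
  shows "\<exists>\<eta>. \<forall>a. \<eta> a = f (seq_restr r \<eta> a)"
proof -
  have wf: "wf (r - Id)"
    using assms unfolding well_order_on_def by blast
  define \<eta> where "\<eta> = wfrec (r - Id) (\<lambda>g a. f (seq_restr r g a))"
  have "\<eta> a = f (seq_restr r \<eta> a)" for a
  proof -
    have "\<eta> a = f (seq_restr r (cut \<eta> (r - Id) a) a)"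
      unfolding \<eta>_def by (rule wfrec[OF wf])
    also have "seq_restr r (cut \<eta> (r - Id) a) a = seq_restr r \<eta> a"
      unfolding seq_restr_def cut_def Order_Relation.underS_def by auto
    finally show ?thesis .
  qed
  then show ?thesis by blast
qed

definition seq_guess :: "'c rel \<Rightarrow> ('c \<Rightarrow> 'l) \<Rightarrow> ('c \<rightharpoonup> 'l) \<rightharpoonup> 'l" where
  "seq_guess r \<eta> s =
    (if \<exists>a \<in> Field r. s = seq_restr r \<eta> a
     then Some (\<eta> (THE a. a \<in> Field r \<and> s = seq_restr r \<eta> a)) else None)"

lemma dom_seq_guess: "dom (seq_guess r \<eta>) = {seq_restr r \<eta> \<alpha> | \<alpha>. \<alpha> \<in> Field r}"
  by (auto simp: seq_guess_def split: if_splits)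

lemma seq_guess_seq_restr:
  assumes "Linear_order r" "a \<in> Field r"
  shows "seq_guess r \<eta> (seq_restr r \<eta> a) = Some (\<eta> a)"
proof -
  have "(THE b. b \<in> Field r \<and> seq_restr r \<eta> a = seq_restr r \<eta> b) = a"
    using assms(2) inj_on_seq_restr[OF assms(1)] by (auto dest: inj_onD)
  with assms(2) show ?thesis by (auto simp: seq_guess_def)
qed

theorem fact1p5:
  fixes r :: "'c rel"
  assumes "Card_order r" and "Field r = UNIV"
    and "infinite (UNIV :: 'c set)" and "infinite (UNIV :: 'l set)"
  shows "\<exists>F :: ('c \<Rightarrow> 'l) \<Rightarrow> (('c \<rightharpoonup> 'l) \<rightharpoonup> 'l).
           (\<forall>\<eta>. dom (F \<eta>) = {seq_restr r \<eta> \<alpha> | \<alpha>. \<alpha> \<in> Field r}) \<and>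
           (\<forall>f :: ('c \<rightharpoonup> 'l) \<Rightarrow> 'l. \<exists>\<eta>. \<forall>s \<in> dom (F \<eta>). F \<eta> s = Some (f s))"
proof -
  have wo: "Well_order r"
    using assms(1) by (rule card_order_on_well_order_on)
  then have lo: "Linear_order r"
    unfolding well_order_on_def by blast
  have guess_correct: "\<exists>\<eta>. \<forall>s \<in> dom (seq_guess r \<eta>). seq_guess r \<eta> s = Some (f s)"
    for f :: "('c \<rightharpoonup> 'l) \<Rightarrow> 'l"
  proof -
    obtain \<eta> where \<eta>: "\<And>a. \<eta> a = f (seq_restr r \<eta> a)"
      using seq_restr_recursion[OF wo] by blast
    have "seq_guess r \<eta> s = Some (f s)" if s_dom: "s \<in> dom (seq_guess r \<eta>)" for s
    proof -
      obtain a where a: "a \<in> Field r" and s: "s = seq_restr r \<eta> a"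
        using s_dom unfolding dom_seq_guess by blast
      have "seq_guess r \<eta> s = Some (\<eta> a)"
        unfolding s by (rule seq_guess_seq_restr[OF lo a])
      also have "\<eta> a = f s"
        unfolding s by (rule \<eta>)
      finally show ?thesis .
    qed
    then show ?thesis by blast
  qed
  show ?thesis
    by (intro exI[of _ "seq_guess r"] conjI allI dom_seq_guess guess_correct)
qed

end
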